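(* Let $X\in L_2^p(P)$ be centered with $\Sigma=\mathrm{Cov}(X)$, let $\varepsilon\in L_2^q(P)$ be centered with $V=\mathrm{Cov}(\varepsilon)$ and stochastically independent of $X$, let $Z\in\mathbb R^{q\times p}$ and $Y=ZX+\varepsilon$. Put $C=\mathrm{Cov}(Y)=Z\Sigma Z^\tau+V$, $K=\Sigma Z^\tau C^-$, $B=Z\Sigma Z^\tau$ and $Z^\Sigma=\Sigma Z^\tau B^-$. Then for every symmetric positive definite $D\in\mathbb R^{p\times p}$, the matrix $A=Z^\Sigma$ solves $$\mathrm E\,\|X-A\,\mathrm{oP}(ZX\,|\,Y)\|_D^2=\min!,\qquad A\in\mathbb R^{p\times q},$$ where $\mathrm{oP}(ZX\,|\,Y)=ZKY$. No rank assumptions on $Z$, $\Sigma$, $B$ or $C$ are made.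
   Context: $M^-$ denotes the Moore–Penrose generalized inverse of a matrix $M$. For symmetric positive (semi-)definite $D$, $\|x\|_D^2:=x^\tau D^-x$. For random vectors $a,b$ in $L_2$, $\mathrm{oP}(a\,|\,b)$ denotes the best linear reconstruction of $a$ by means of $b$, i.e. the componentwise orthogonal $L_2$-projection of $a$ onto the closed linear span of the components of $b$; here $\mathrm{oP}(X|Y)=KY$ and $\mathrm{oP}(ZX|Y)=ZKY$. *)

theory Defs
  imports "HOL-Probability.Probability"
begin

definition mp_inverse :: "real^'n^'m \<Rightarrow> real^'m^'n" where
  "mp_inverse A = (THE G. A ** G ** A = A \<and> G ** A ** G = G \<and>
      transpose (A ** G) = A ** G \<and> transpose (G ** A) = G ** A)"

definition cov_mat :: "'a measure \<Rightarrow> ('a \<Rightarrow> real^'n) \<Rightarrow> real^'n^'n" where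
  "cov_mat M X = (\<chi> i j. integral\<^sup>L M (\<lambda>\<omega>. (X \<omega> $ i - integral\<^sup>L M (\<lambda>\<omega>. X \<omega> $ i))
                                         * (X \<omega> $ j - integral\<^sup>L M (\<lambda>\<omega>. X \<omega> $ j))))"

definition L2_vec :: "'a measure \<Rightarrow> ('a \<Rightarrow> real^'n) \<Rightarrow> bool" where
  "L2_vec M X \<longleftrightarrow> X \<in> borel_measurable M \<and> (\<forall>i. integrable M (\<lambda>\<omega>. (X \<omega> $ i)\<^sup>2))"

definition Dnorm_sq :: "real^'n^'n \<Rightarrow> real^'n \<Rightarrow> real" where
  "Dnorm_sq D x = x \<bullet> (mp_inverse D *v x)"

end

theory Submission
  imports Defs
begin

text \<open>
  The proof is the orthogonality principle: a matrix A0 minimises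
  E |X - A W|_D^2 over all A as soon as the residual X - A0 W is uncorrelated with W, since then
  the risk of any A is the risk of A0 plus the nonnegative term E |(A0 - A) W|_D^2.
\<close>

definition orth_proj :: "'a::euclidean_space set \<Rightarrow> ('a \<Rightarrow> 'a) \<Rightarrow> bool" where
  "orth_proj U P \<longleftrightarrow> (\<forall>x. P x \<in> U) \<and> (\<forall>x w. w \<in> U \<longrightarrow> (x - P x) \<bullet> w = 0)"

lemma orth_proj_exists:
  fixes U :: "'a::euclidean_space set"
  assumes "subspace U"
  shows "\<exists>P. orth_proj U P"
proof -
  have "\<exists>y. y \<in> U \<and> (\<forall>w\<in>U. (x - y) \<bullet> w = 0)" for x
  proof -
    obtain y z where "y \<in> span U" "\<And>w. w \<in> span U \<Longrightarrow> orthogonal z w" "x = y + z"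
      using orthogonal_subspace_decomp_exists by blast
    moreover have "span U = U"
      using assms by (simp add: span_eq_iff)
    ultimately show ?thesis
      by (intro exI[of _ y]) (auto simp: orthogonal_def)
  qed
  then show ?thesis
    unfolding orth_proj_def by metis
qed

lemma orth_proj_unique:
  fixes U :: "'a::euclidean_space set"
  assumes "subspace U" "orth_proj U P" "y \<in> U" "\<And>w. w \<in> U \<Longrightarrow> (x - y) \<bullet> w = 0"
  shows "y = P x"
proof -
  have "P x - y \<in> U"
    using assms subspace_diff unfolding orth_proj_def by blast
  then have "(x - y) \<bullet> (P x - y) = 0" "(x - P x) \<bullet> (P x - y) = 0"
    using assms unfolding orth_proj_def by auto
  then have "(P x - y) \<bullet> (P x - y) = 0"
    by (simp add: inner_diff_left inner_diff_right)
  then show ?thesis by simp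
qed

lemma orth_proj_fixes:
  assumes "subspace U" "orth_proj U P" "u \<in> U"
  shows "P u = u"
  using orth_proj_unique[OF assms] by simp

lemma orth_proj_linear:
  assumes U: "subspace U" and P: "orth_proj U P"
  shows "linear P"
proof (rule linearI)
  have in_U: "P x \<in> U" and orth: "w \<in> U \<Longrightarrow> (x - P x) \<bullet> w = 0" for x w
    using P unfolding orth_proj_def by auto
  show "P (a + b) = P a + P b" for a b
  proof (rule orth_proj_unique[OF U P, symmetric])
    show "P a + P b \<in> U"
      using in_U subspace_add[OF U] by blast
    show "(a + b - (P a + P b)) \<bullet> w = 0" if "w \<in> U" for w
      using orth[OF that, of a] orth[OF that, of b] by (simp add: algebra_simps inner_diff_left)
  qed
  show "P (c *\<^sub>R a) = c *\<^sub>R P a" for c a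
  proof (rule orth_proj_unique[OF U P, symmetric])
    show "c *\<^sub>R P a \<in> U"
      using in_U subspace_scale[OF U] by blast
    show "(c *\<^sub>R a - c *\<^sub>R P a) \<bullet> w = 0" if "w \<in> U" for w
      using orth[OF that, of a] by (simp add: scaleR_diff_right[symmetric] del: scaleR_diff_right)
  qed
qed

text \<open>Orthogonal projections are self-adjoint; this makes A G and G A symmetric below.\<close>
lemma orth_proj_self_adjoint:
  assumes "orth_proj U P"
  shows "P x \<bullet> y = x \<bullet> P y"
proof -
  have "P x \<bullet> (y - P y) = 0" "(x - P x) \<bullet> P y = 0"
    using assms unfolding orth_proj_def by (auto simp: inner_commute)
  then show ?thesis
    by (simp add: inner_diff_left inner_diff_right)
qed

lemma inner_mv_transpose: "(x::real^'m) \<bullet> (A *v y) = (transpose A *v x) \<bullet> y"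
  by (simp add: dot_lmul_matrix)

lemma symmetric_if_self_adjoint:
  fixes S :: "real^'n^'n"
  assumes "\<And>x y. (S *v x) \<bullet> y = x \<bullet> (S *v y)"
  shows "transpose S = S"
proof -
  have "(transpose S *v y) \<bullet> x = (S *v y) \<bullet> x" for x y
    by (metis assms inner_commute inner_mv_transpose)
  then have "(transpose S *v y - S *v y) \<bullet> x = 0" for x y
    by (simp add: inner_diff_left)
  then have "transpose S *v y = S *v y" for y
    by (metis inner_eq_zero_iff right_minus_eq)
  then show ?thesis by (simp add: matrix_eq)
qed

lemma subspace_range_mv: "subspace (range (\<lambda>x. (A::real^'n^'m) *v x))"
  by (rule linear_subspace_image[OF matrix_vector_mul_linear subspace_UNIV])

lemma mv_vanishes_on_orthogonal_rowspace:
  fixes A :: "real^'n^'m"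
  assumes "\<And>w. w \<in> range (\<lambda>y. transpose A *v y) \<Longrightarrow> t \<bullet> w = 0"
  shows "A *v t = 0"
proof -
  have "t \<bullet> (transpose A *v (A *v t)) = 0"
    using assms by blast
  then have "(A *v t) \<bullet> (A *v t) = 0"
    by (simp add: inner_mv_transpose inner_commute)
  then show ?thesis by simp
qed

lemma mv_rowspace_projection:
  fixes A :: "real^'n^'m"
  assumes "orth_proj (range (\<lambda>y. transpose A *v y)) r"
  shows "A *v r x = A *v x"
proof -
  have "A *v (x - r x) = 0"
    using assms by (intro mv_vanishes_on_orthogonal_rowspace) (simp add: orth_proj_def)
  then show ?thesis
    by (simp add: matrix_vector_mult_diff_distrib)
qed

lemma mv_injective_on_rowspace:
  fixes A :: "real^'n^'m"
  assumes "s \<in> range (\<lambda>y. transpose A *v y)" "s' \<in> range (\<lambda>y. transpose A *v y)"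
    and "A *v s = A *v s'"
  shows "s = s'"
proof -
  obtain y where y: "s - s' = transpose A *v y"
    using assms(1,2) subspace_diff[OF subspace_range_mv] by blast
  have "(s - s') \<bullet> (s - s') = y \<bullet> (A *v (s - s'))"
    by (simp add: y inner_mv_transpose)
  then show ?thesis
    using assms(3) by (simp add: matrix_vector_mult_diff_distrib)
qed

definition penrose :: "real^'n^'m \<Rightarrow> real^'m^'n \<Rightarrow> bool" where
  "penrose A G \<longleftrightarrow> A ** G ** A = A \<and> G ** A ** G = G \<and>
      transpose (A ** G) = A ** G \<and> transpose (G ** A) = G ** A"

text \<open>With p, r the projections onto the column space and the row space of A, the map sending y
  to the unique row-space solution of A x = p y is linear; it is the Moore--Penrose inverse.\<close>
lemma rowspace_inverse_exists:
  fixes A :: "real^'n^'m"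
  assumes p: "orth_proj (range (\<lambda>x. A *v x)) p"
    and r: "orth_proj (range (\<lambda>y. transpose A *v y)) r"
  shows "\<exists>g. linear g \<and> (\<forall>y. A *v g y = p y) \<and> (\<forall>x. g (A *v x) = r x) \<and> (\<forall>y. g (p y) = g y)"
proof -
  let ?V = "range (\<lambda>x. A *v x)" and ?S = "range (\<lambda>y. transpose A *v y)"
  have V: "subspace ?V" and S: "subspace ?S"
    by (rule subspace_range_mv)+
  have A_r: "A *v r x = A *v x" for x
    by (rule mv_rowspace_projection[OF r])
  have p_fix: "p (A *v x) = A *v x" for x
    by (rule orth_proj_fixes[OF V p]) simp
  define g where "g y = r (SOME x. A *v x = p y)" for y
  have g_in: "g y \<in> ?S" for y
    using r unfolding g_def orth_proj_def by blast
  have g_sol: "A *v g y = p y" for y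
  proof -
    have "p y \<in> ?V"
      using p by (simp add: orth_proj_def)
    then have "\<exists>x. A *v x = p y"
      by (metis rangeE)
    then have "A *v (SOME x. A *v x = p y) = p y"
      by (rule someI_ex)
    then show ?thesis
      by (simp add: g_def A_r)
  qed
  have g_eq: "g y = s" if "s \<in> ?S" "A *v s = p y" for s y
    using mv_injective_on_rowspace[OF g_in that(1)] g_sol that(2) by simp
  have p_lin: "linear p"
    by (rule orth_proj_linear[OF V p])
  have g_lin: "linear g"
  proof (rule linearI)
    show "g (a + b) = g a + g b" for a b
      by (rule g_eq) (use g_in g_sol subspace_add[OF S] linear_add[OF p_lin]
          in \<open>auto simp: matrix_vector_right_distrib\<close>)
    show "g (c *\<^sub>R a) = c *\<^sub>R g a" for c a
      by (rule g_eq) (use g_in g_sol subspace_scale[OF S] linear_scale[OF p_lin]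
          in \<open>auto simp: matrix_vector_mult_scaleR\<close>)
  qed
  have g_A: "g (A *v x) = r x" for x
  proof (rule g_eq)
    show "r x \<in> ?S"
      using r unfolding orth_proj_def by blast
    show "A *v r x = p (A *v x)"
      by (simp add: A_r p_fix)
  qed
  have g_p: "g (p y) = g y" for y
  proof (rule g_eq[OF g_in])
    have "p y \<in> ?V"
      using p unfolding orth_proj_def by blast
    then show "A *v g y = p (p y)"
      by (simp add: g_sol orth_proj_fixes[OF V p])
  qed
  show ?thesis
    by (intro exI[of _ g] conjI allI g_lin g_sol g_A g_p)
qed

lemma penrose_exists:
  fixes A :: "real^'n^'m"
  shows "\<exists>G. penrose A G"
proof -
  obtain p where p: "orth_proj (range (\<lambda>x. A *v x)) p"
    using orth_proj_exists subspace_range_mv by blast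
  obtain r where r: "orth_proj (range (\<lambda>y. transpose A *v y)) r"
    using orth_proj_exists subspace_range_mv by blast
  obtain g where g: "linear g" "\<And>y. A *v g y = p y" "\<And>x. g (A *v x) = r x" "\<And>y. g (p y) = g y"
    using rowspace_inverse_exists[OF p r] by blast
  define G where "G = matrix g"
  have G: "G *v y = g y" for y
    unfolding G_def using g(1) by simp
  have p_fix: "p (A *v x) = A *v x" for x
    by (rule orth_proj_fixes[OF subspace_range_mv p]) simp
  have "A ** G ** A = A"
    by (simp add: matrix_eq matrix_vector_mul_assoc[symmetric] G g(2) p_fix)
  moreover have "G ** A ** G = G"
    by (simp add: matrix_eq matrix_vector_mul_assoc[symmetric] G g(2,4))
  moreover have "transpose (A ** G) = A ** G"
  proof (rule symmetric_if_self_adjoint)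
    show "(A ** G *v x) \<bullet> y = x \<bullet> (A ** G *v y)" for x y
      using orth_proj_self_adjoint[OF p, of x y]
      by (simp add: matrix_vector_mul_assoc[symmetric] G g(2))
  qed
  moreover have "transpose (G ** A) = G ** A"
  proof (rule symmetric_if_self_adjoint)
    show "(G ** A *v x) \<bullet> y = x \<bullet> (G ** A *v y)" for x y
      using orth_proj_self_adjoint[OF r, of x y]
      by (simp add: matrix_vector_mul_assoc[symmetric] G g(3))
  qed
  ultimately show ?thesis
    unfolding penrose_def by blast
qed

text \<open>Uniqueness of the Moore--Penrose inverse (the classical computation G1 = G1 A G2 = G2).\<close>
lemma penrose_unique:
  fixes A :: "real^'n^'m"
  assumes "penrose A G1" "penrose A G2"
  shows "G1 = G2"
proof -
  have a1: "A ** G1 ** A = A" "G1 ** A ** G1 = G1" "transpose (A ** G1) = A ** G1" "transpose (G1 ** A) = G1 ** A"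
    using assms(1) unfolding penrose_def by auto
  have a2: "A ** G2 ** A = A" "G2 ** A ** G2 = G2" "transpose (A ** G2) = A ** G2" "transpose (G2 ** A) = G2 ** A"
    using assms(2) unfolding penrose_def by auto
  have tA2: "transpose A = transpose A ** A ** G2"
  proof -
    have "transpose A = transpose (A ** G2 ** A)" using a2 by simp
    also have "\<dots> = transpose A ** transpose (A ** G2)" by (simp add: matrix_transpose_mul)
    also have "\<dots> = transpose A ** A ** G2" using a2 by (simp add: matrix_mul_assoc)
    finally show ?thesis .
  qed
  have tA1: "transpose A = G1 ** A ** transpose A"
  proof -
    have "transpose A = transpose (A ** G1 ** A)" using a1 by simp
    also have "\<dots> = transpose (G1 ** A) ** transpose A" by (simp add: matrix_transpose_mul matrix_mul_assoc)
    also have "\<dots> = G1 ** A ** transpose A" using a1 by simp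
    finally show ?thesis .
  qed
  have "G1 = G1 ** transpose (A ** G1)" using a1 by (simp add: matrix_mul_assoc)
  also have "\<dots> = G1 ** transpose G1 ** transpose A" by (simp add: matrix_transpose_mul matrix_mul_assoc)
  also have "\<dots> = G1 ** transpose G1 ** (transpose A ** A ** G2)" using tA2 by metis
  also have "\<dots> = G1 ** transpose (A ** G1) ** A ** G2" by (simp add: matrix_transpose_mul matrix_mul_assoc)
  also have "\<dots> = G1 ** A ** G2" using a1 by (simp add: matrix_mul_assoc)
  finally have G1_eq: "G1 = G1 ** A ** G2" .
  have "G2 = transpose (G2 ** A) ** G2" using a2 by simp
  also have "\<dots> = transpose A ** transpose G2 ** G2" by (simp add: matrix_transpose_mul)
  also have "\<dots> = G1 ** A ** transpose A ** transpose G2 ** G2" using tA1 by metis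
  also have "\<dots> = G1 ** A ** transpose (G2 ** A) ** G2" by (simp add: matrix_transpose_mul matrix_mul_assoc)
  also have "\<dots> = G1 ** A ** (G2 ** A ** G2)" by (simp only: a2(4) matrix_mul_assoc)
  also have "\<dots> = G1 ** A ** G2" using a2 by simp
  finally show ?thesis using G1_eq by simp
qed

lemma mp_inverse_penrose: "penrose A (mp_inverse A)"
proof -
  have "\<exists>!G. penrose A G"
    using penrose_exists penrose_unique by blast
  then have "penrose A (THE G. penrose A G)"
    by (rule theI')
  then show ?thesis
    unfolding mp_inverse_def penrose_def .
qed

lemma mp_inverse_symmetric:
  fixes S :: "real^'n^'n"
  assumes "transpose S = S"
  shows "transpose (mp_inverse S) = mp_inverse S"
proof -
  define G where "G = mp_inverse S"
  have G: "S ** G ** S = S" "G ** S ** G = G" "transpose (S ** G) = S ** G" "transpose (G ** S) = G ** S"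
    using mp_inverse_penrose[of S] unfolding penrose_def G_def by auto
  have "penrose S (transpose G)"
    unfolding penrose_def
    by (metis G assms matrix_transpose_mul matrix_mul_assoc transpose_transpose)
  then show ?thesis
    using penrose_unique mp_inverse_penrose unfolding G_def by blast
qed

text \<open>The Moore--Penrose inverse of a symmetric psd matrix is psd, since S^- = S^- S S^-;
  this makes |x|_D^2 = x^T D^- x nonnegative.\<close>
lemma mp_inverse_psd:
  fixes S :: "real^'n^'n"
  assumes sym: "transpose S = S" and psd: "\<And>x. 0 \<le> x \<bullet> (S *v x)"
  shows "0 \<le> x \<bullet> (mp_inverse S *v x)"
proof -
  define G where "G = mp_inverse S"
  have G: "G ** S ** G = G" "transpose G = G"
    using mp_inverse_penrose[of S] mp_inverse_symmetric[OF sym] unfolding penrose_def G_def by auto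
  have "x \<bullet> (G *v x) = x \<bullet> (G *v (S *v (G *v x)))"
    by (metis G(1) matrix_vector_mul_assoc)
  also have "\<dots> = (G *v x) \<bullet> (S *v (G *v x))"
    by (metis inner_mv_transpose G(2))
  also have "\<dots> \<ge> 0"
    by (rule psd)
  finally show ?thesis
    unfolding G_def .
qed

lemma nonneg_quadratic_linear_coeff_zero:
  fixes a b :: real
  assumes "b \<ge> 0" "\<And>t. 0 \<le> 2*t*a + t^2*b"
  shows "a = 0"
proof -
  define c where "c = b + 1"
  have c: "c > 0" using assms(1) c_def by simp
  define t where "t = -a/c"
  have "(2*t*a + t^2*b) * c^2 = a^2 * (b - 2*c)"
    unfolding t_def using c by (simp add: field_simps power2_eq_square)
  moreover have "0 \<le> (2*t*a + t^2*b) * c^2"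
    using assms(2) by simp
  moreover have "b - 2*c < 0"
    using c_def assms(1) by simp
  ultimately show ?thesis
    using mult_pos_neg[of "a^2" "b - 2*c"] by (cases "a = 0") auto
qed

lemma psd_kernel:
  fixes S :: "real^'n^'n"
  assumes sym: "transpose S = S" and psd: "\<And>x. 0 \<le> x \<bullet> (S *v x)"
    and w: "w \<bullet> (S *v w) = 0"
  shows "S *v w = 0"
proof -
  define y where "y = S *v w"
  have Sy: "w \<bullet> (S *v y) = y \<bullet> y" "y \<bullet> (S *v w) = y \<bullet> y"
    unfolding y_def by (metis inner_commute inner_mv_transpose sym)+
  have "0 \<le> 2*t*(y \<bullet> y) + t^2*(y \<bullet> (S *v y))" for t
  proof -
    have "0 \<le> (w + t *\<^sub>R y) \<bullet> (S *v (w + t *\<^sub>R y))"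
      by (rule psd)
    also have "\<dots> = w \<bullet> (S *v w) + t * (w \<bullet> (S *v y)) + t * (y \<bullet> (S *v w)) + t^2 * (y \<bullet> (S *v y))"
      by (simp add: matrix_vector_right_distrib matrix_vector_mult_scaleR inner_add_left
          inner_add_right power2_eq_square algebra_simps)
    also have "\<dots> = 2*t*(y \<bullet> y) + t^2*(y \<bullet> (S *v y))"
      using w Sy by simp
    finally show ?thesis .
  qed
  then have "y \<bullet> y = 0"
    using nonneg_quadratic_linear_coeff_zero psd by blast
  then show ?thesis
    unfolding y_def by simp
qed

text \<open>Range inclusion without rank assumptions: for psd \<Sigma> and any generalised inverse G of
  B = Z \<Sigma> Z^T (i.e. B G B = B) one has \<Sigma> Z^T G B = \<Sigma> Z^T.\<close>
lemma psd_congruence_range: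
  fixes \<Sigma> :: "real^'p^'p" and Z :: "real^'p^'q"
  assumes sym: "transpose \<Sigma> = \<Sigma>" and psd: "\<And>x. 0 \<le> x \<bullet> (\<Sigma> *v x)"
    and B: "B = Z ** \<Sigma> ** transpose Z" and BGB: "B ** G ** B = B"
  shows "\<Sigma> ** transpose Z ** G ** B = \<Sigma> ** transpose Z"
proof -
  have "\<Sigma> *v (transpose Z *v (G *v (B *v x))) = \<Sigma> *v (transpose Z *v x)" for x
  proof -
    define e where "e = x - G *v (B *v x)"
    have "B *v e = 0"
      using BGB unfolding e_def
      by (simp add: matrix_vector_mult_diff_distrib matrix_vector_mul_assoc matrix_mul_assoc)
    moreover have "(transpose Z *v e) \<bullet> (\<Sigma> *v (transpose Z *v e)) = e \<bullet> (B *v e)"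
      unfolding B by (simp add: inner_mv_transpose matrix_vector_mul_assoc[symmetric])
    ultimately have "\<Sigma> *v (transpose Z *v e) = 0"
      using psd_kernel[OF sym psd] by simp
    then show ?thesis
      unfolding e_def by (simp add: matrix_vector_mult_diff_distrib)
  qed
  then show ?thesis
    by (simp add: matrix_eq matrix_vector_mul_assoc[symmetric])
qed

text \<open>The matrix identity behind the theorem: E[W X^T] = E[W W^T] Z_\<Sigma>^T for W = Z K Y, written in
  terms of \<Sigma>, Z and C.\<close>
lemma reconstruction_gain_identity:
  fixes \<Sigma> :: "real^'p^'p" and Z :: "real^'p^'q" and C :: "real^'q^'q"
  assumes sym: "transpose \<Sigma> = \<Sigma>" and psd: "\<And>x. 0 \<le> x \<bullet> (\<Sigma> *v x)"
    and C_sym: "transpose C = C"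
    and K: "K = \<Sigma> ** transpose Z ** mp_inverse C"
    and B: "B = Z ** \<Sigma> ** transpose Z"
    and A0: "A0 = \<Sigma> ** transpose Z ** mp_inverse B"
  shows "Z ** K ** Z ** \<Sigma> = Z ** K ** C ** transpose K ** transpose Z ** transpose A0"
proof -
  define H where "H = mp_inverse C"
  define G where "G = mp_inverse B"
  have B_sym: "transpose B = B"
    unfolding B using sym by (simp add: matrix_transpose_mul matrix_mul_assoc)
  have H: "H ** C ** H = H" "transpose H = H"
    using mp_inverse_penrose[of C] mp_inverse_symmetric[OF C_sym] unfolding penrose_def H_def by auto
  have G: "B ** G ** B = B" "transpose G = G"
    using mp_inverse_penrose[of B] mp_inverse_symmetric[OF B_sym] unfolding penrose_def G_def by auto
  have "transpose (\<Sigma> ** transpose Z ** G ** B) = transpose (\<Sigma> ** transpose Z)"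
    using psd_congruence_range[OF sym psd B G(1)] by simp
  then have BGZ: "B ** G ** Z ** \<Sigma> = Z ** \<Sigma>"
    using sym G(2) B_sym by (simp add: matrix_transpose_mul matrix_mul_assoc)
  have K_t: "transpose K = H ** Z ** \<Sigma>"
    unfolding K H_def[symmetric] using sym H(2) by (simp add: matrix_transpose_mul matrix_mul_assoc)
  have A0_t: "transpose A0 = G ** Z ** \<Sigma>"
    unfolding A0 G_def[symmetric] using sym G(2) by (simp add: matrix_transpose_mul matrix_mul_assoc)
  have "Z ** K ** C ** transpose K ** transpose Z ** transpose A0
      = Z ** \<Sigma> ** transpose Z ** (H ** C ** H) ** (B ** G ** Z ** \<Sigma>)"
    unfolding K_t A0_t unfolding K H_def[symmetric] B by (simp add: matrix_mul_assoc)
  also have "\<dots> = Z ** K ** Z ** \<Sigma>"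
    by (simp only: H(1) BGZ) (simp add: K H_def matrix_mul_assoc)
  finally show ?thesis ..
qed


definition L2_fun :: "'a measure \<Rightarrow> ('a \<Rightarrow> real) \<Rightarrow> bool" where
  "L2_fun M f \<longleftrightarrow> f \<in> borel_measurable M \<and> integrable M (\<lambda>\<omega>. (f \<omega>)\<^sup>2)"

text \<open>Products of square-integrable functions are integrable, since |f g| <= f^2 + g^2.\<close>
lemma L2_fun_mult_integrable:
  assumes "L2_fun M f" "L2_fun M g"
  shows "integrable M (\<lambda>\<omega>. f \<omega> * g \<omega>)"
proof (rule Bochner_Integration.integrable_bound)
  show "integrable M (\<lambda>\<omega>. (f \<omega>)\<^sup>2 + (g \<omega>)\<^sup>2)"
    using assms unfolding L2_fun_def by simp
  show "(\<lambda>\<omega>. f \<omega> * g \<omega>) \<in> borel_measurable M"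
    using assms unfolding L2_fun_def by auto
  have "\<bar>f \<omega> * g \<omega>\<bar> \<le> (f \<omega>)\<^sup>2 + (g \<omega>)\<^sup>2" for \<omega>
    using sum_squares_bound[of "\<bar>f \<omega>\<bar>" "\<bar>g \<omega>\<bar>"] abs_ge_zero[of "f \<omega> * g \<omega>"]
    unfolding abs_mult power2_abs by linarith
  then show "AE \<omega> in M. norm (f \<omega> * g \<omega>) \<le> norm ((f \<omega>)\<^sup>2 + (g \<omega>)\<^sup>2)"
    by simp
qed

lemma L2_fun_add:
  assumes "L2_fun M f" "L2_fun M g"
  shows "L2_fun M (\<lambda>\<omega>. f \<omega> + g \<omega>)"
proof -
  have "(\<lambda>\<omega>. (f \<omega> + g \<omega>)\<^sup>2) = (\<lambda>\<omega>. (f \<omega>)\<^sup>2 + 2 * (f \<omega> * g \<omega>) + (g \<omega>)\<^sup>2)"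
    by (simp add: power2_sum mult.assoc add_ac)
  then show ?thesis
    using assms L2_fun_mult_integrable[OF assms] unfolding L2_fun_def by auto
qed

lemma L2_fun_scale: "L2_fun M f \<Longrightarrow> L2_fun M (\<lambda>\<omega>. c * f \<omega>)"
  unfolding L2_fun_def by (auto simp: power_mult_distrib)

lemma L2_fun_sum:
  assumes "\<And>i. i \<in> I \<Longrightarrow> L2_fun M (f i)"
  shows "L2_fun M (\<lambda>\<omega>. \<Sum>i\<in>I. f i \<omega>)"
  using assms
proof (induction I rule: infinite_finite_induct)
  case (insert i I)
  then show ?case
    using L2_fun_add[of M "f i" "\<lambda>\<omega>. \<Sum>i\<in>I. f i \<omega>"] by simp
qed (simp_all add: L2_fun_def)

lemma L2_fun_integrable:
  assumes "finite_measure M" "L2_fun M f"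
  shows "integrable M f"
  using finite_measure.square_integrable_imp_integrable[OF assms(1)] assms(2)
  unfolding L2_fun_def by blast

lemma L2_vec_component: "L2_vec M U \<Longrightarrow> L2_fun M (\<lambda>\<omega>. U \<omega> $ i)"
  unfolding L2_vec_def L2_fun_def
  by (auto intro: borel_measurable_continuous_on[OF continuous_on_component[OF continuous_on_id]])

lemma L2_vec_iff_components:
  "L2_vec M U \<longleftrightarrow> U \<in> borel_measurable M \<and> (\<forall>i. L2_fun M (\<lambda>\<omega>. U \<omega> $ i))"
  using L2_vec_component unfolding L2_vec_def L2_fun_def by blast

lemma L2_vec_mv:
  assumes "L2_vec M U"
  shows "L2_vec M (\<lambda>\<omega>. R *v U \<omega>)"
  unfolding L2_vec_iff_components
proof
  show "(\<lambda>\<omega>. R *v U \<omega>) \<in> borel_measurable M"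
    using assms unfolding L2_vec_def by (simp add: linear_continuous_on borel_measurable_continuous_on)
  have "L2_fun M (\<lambda>\<omega>. \<Sum>j\<in>UNIV. R $ i $ j * U \<omega> $ j)" for i
    by (intro L2_fun_sum L2_fun_scale L2_vec_component assms)
  then show "\<forall>i. L2_fun M (\<lambda>\<omega>. (R *v U \<omega>) $ i)"
    by (simp add: matrix_vector_mult_def)
qed

lemma L2_vec_add:
  assumes "L2_vec M U" "L2_vec M V"
  shows "L2_vec M (\<lambda>\<omega>. U \<omega> + V \<omega>)"
  unfolding L2_vec_iff_components
proof
  show "(\<lambda>\<omega>. U \<omega> + V \<omega>) \<in> borel_measurable M"
    using assms unfolding L2_vec_def by auto
  show "\<forall>i. L2_fun M (\<lambda>\<omega>. (U \<omega> + V \<omega>) $ i)"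
    using L2_fun_add[OF L2_vec_component[OF assms(1)] L2_vec_component[OF assms(2)]] by simp
qed

lemma L2_vec_diff:
  assumes "L2_vec M U" "L2_vec M V"
  shows "L2_vec M (\<lambda>\<omega>. U \<omega> - V \<omega>)"
  unfolding L2_vec_iff_components
proof
  show "(\<lambda>\<omega>. U \<omega> - V \<omega>) \<in> borel_measurable M"
    using assms unfolding L2_vec_def by auto
  show "\<forall>i. L2_fun M (\<lambda>\<omega>. (U \<omega> - V \<omega>) $ i)"
    using L2_fun_add[OF L2_vec_component[OF assms(1)] L2_fun_scale[OF L2_vec_component[OF assms(2)], of "-1"]]
    by simp
qed

definition cross_moment :: "'a measure \<Rightarrow> ('a \<Rightarrow> real^'n) \<Rightarrow> ('a \<Rightarrow> real^'m) \<Rightarrow> real^'m^'n" where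
  "cross_moment M U V = (\<chi> i j. \<integral>\<omega>. U \<omega> $ i * V \<omega> $ j \<partial>M)"

lemma cross_moment_integrable:
  assumes "L2_vec M U" "L2_vec M V"
  shows "integrable M (\<lambda>\<omega>. U \<omega> $ i * V \<omega> $ j)"
  by (rule L2_fun_mult_integrable[OF L2_vec_component[OF assms(1)] L2_vec_component[OF assms(2)]])

lemma cross_moment_transpose: "cross_moment M V U = transpose (cross_moment M U V)"
  unfolding cross_moment_def transpose_def by (simp add: vec_eq_iff mult.commute)

lemma cross_moment_mv_left:
  assumes "L2_vec M U" "L2_vec M V"
  shows "cross_moment M (\<lambda>\<omega>. R *v U \<omega>) V = R ** cross_moment M U V"
proof -
  have "(\<integral>\<omega>. (R *v U \<omega>) $ i * V \<omega> $ j \<partial>M) = (\<Sum>k\<in>UNIV. R $ i $ k * (\<integral>\<omega>. U \<omega> $ k * V \<omega> $ j \<partial>M))"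
    for i j
  proof -
    have "(\<integral>\<omega>. (R *v U \<omega>) $ i * V \<omega> $ j \<partial>M)
        = (\<integral>\<omega>. (\<Sum>k\<in>UNIV. R $ i $ k * (U \<omega> $ k * V \<omega> $ j)) \<partial>M)"
      by (simp add: matrix_vector_mult_def sum_distrib_right mult.assoc)
    also have "\<dots> = (\<Sum>k\<in>UNIV. R $ i $ k * (\<integral>\<omega>. U \<omega> $ k * V \<omega> $ j \<partial>M))"
      using cross_moment_integrable[OF assms] by simp
    finally show ?thesis .
  qed
  then show ?thesis
    unfolding cross_moment_def by (simp add: vec_eq_iff matrix_matrix_mult_def)
qed

lemma cross_moment_mv_right:
  assumes "L2_vec M U" "L2_vec M V"
  shows "cross_moment M U (\<lambda>\<omega>. R *v V \<omega>) = cross_moment M U V ** transpose R"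
  using cross_moment_mv_left[OF assms(2,1), of R]
  by (metis cross_moment_transpose matrix_transpose_mul transpose_transpose)

lemma cross_moment_add_left:
  assumes "L2_vec M U" "L2_vec M U'" "L2_vec M V"
  shows "cross_moment M (\<lambda>\<omega>. U \<omega> + U' \<omega>) V = cross_moment M U V + cross_moment M U' V"
  unfolding cross_moment_def
  using cross_moment_integrable[OF assms(1,3)] cross_moment_integrable[OF assms(2,3)]
  by (simp add: vec_eq_iff distrib_right)

lemma cross_moment_diff_right:
  assumes "L2_vec M U" "L2_vec M V" "L2_vec M V'"
  shows "cross_moment M U (\<lambda>\<omega>. V \<omega> - V' \<omega>) = cross_moment M U V - cross_moment M U V'"
  unfolding cross_moment_def
  using cross_moment_integrable[OF assms(1,2)] cross_moment_integrable[OF assms(1,3)]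
  by (simp add: vec_eq_iff right_diff_distrib)

lemma integral_inner_cross_moment:
  assumes "L2_vec M U" "L2_vec M V"
  shows "integrable M (\<lambda>\<omega>. U \<omega> \<bullet> V \<omega>)"
    and "(\<integral>\<omega>. U \<omega> \<bullet> V \<omega> \<partial>M) = (\<Sum>i\<in>UNIV. cross_moment M U V $ i $ i)"
  using cross_moment_integrable[OF assms] by (simp_all add: inner_vec_def cross_moment_def)

text \<open>Second-moment matrices are psd: x^T E[U U^T] x = E[(x . U)^2].\<close>
lemma cross_moment_psd:
  assumes "L2_vec M U"
  shows "0 \<le> x \<bullet> (cross_moment M U U *v x)"
proof -
  have "x \<bullet> (cross_moment M U U *v x)
      = (\<Sum>i\<in>UNIV. \<Sum>j\<in>UNIV. x $ i * x $ j * (\<integral>\<omega>. U \<omega> $ i * U \<omega> $ j \<partial>M))"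
    by (simp add: inner_vec_def matrix_vector_mult_def cross_moment_def sum_distrib_left mult_ac)
  also have "\<dots> = (\<integral>\<omega>. (\<Sum>i\<in>UNIV. \<Sum>j\<in>UNIV. x $ i * x $ j * (U \<omega> $ i * U \<omega> $ j)) \<partial>M)"
    using cross_moment_integrable[OF assms assms] by simp
  also have "\<dots> = (\<integral>\<omega>. (x \<bullet> U \<omega>) * (x \<bullet> U \<omega>) \<partial>M)"
    by (simp add: inner_vec_def sum_product mult_ac)
  also have "\<dots> \<ge> 0"
    by (rule integral_nonneg_AE) simp
  finally show ?thesis .
qed

definition centered :: "'a measure \<Rightarrow> ('a \<Rightarrow> real^'n) \<Rightarrow> bool" where
  "centered M U \<longleftrightarrow> (\<forall>i. (\<integral>\<omega>. U \<omega> $ i \<partial>M) = 0)"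

lemma cov_mat_centered: "centered M U \<Longrightarrow> cov_mat M U = cross_moment M U U"
  unfolding centered_def cov_mat_def cross_moment_def by simp

lemma centered_affine:
  assumes "finite_measure M" "L2_vec M U" "L2_vec M V" "centered M U" "centered M V"
  shows "centered M (\<lambda>\<omega>. R *v U \<omega> + V \<omega>)"
  unfolding centered_def
proof
  fix i
  have "integrable M (\<lambda>\<omega>. U \<omega> $ k)" for k
    using L2_fun_integrable[OF assms(1) L2_vec_component[OF assms(2)]] .
  moreover have "integrable M (\<lambda>\<omega>. V \<omega> $ i)"
    using L2_fun_integrable[OF assms(1) L2_vec_component[OF assms(3)]] .
  ultimately
  have "(\<integral>\<omega>. (R *v U \<omega> + V \<omega>) $ i \<partial>M)
      = (\<Sum>k\<in>UNIV. R $ i $ k * (\<integral>\<omega>. U \<omega> $ k \<partial>M)) + (\<integral>\<omega>. V \<omega> $ i \<partial>M)"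
    by (simp add: matrix_vector_mult_def)
  then show "(\<integral>\<omega>. (R *v U \<omega> + V \<omega>) $ i \<partial>M) = 0"
    using assms(4,5) unfolding centered_def by simp
qed

text \<open>Coordinate projections are Borel, so the events generated by a component are among those
  generated by the vector; hence components of independent vectors are independent.\<close>
lemma component_measurable: "(\<lambda>x::real^'n. x $ i) \<in> borel_measurable borel"
  by (rule borel_measurable_continuous_onI[OF continuous_on_component[OF continuous_on_id]])

lemma generated_component_subset:
  fixes U :: "'a \<Rightarrow> real^'n"
  shows "{(\<lambda>\<omega>. U \<omega> $ i) -` A \<inter> space M |A. A \<in> sets borel} \<subseteq> {U -` A \<inter> space M |A. A \<in> sets borel}"
proof
  fix S assume "S \<in> {(\<lambda>\<omega>. U \<omega> $ i) -` A \<inter> space M |A. A \<in> sets borel}"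
  then obtain A where A: "A \<in> sets borel" "S = (\<lambda>\<omega>. U \<omega> $ i) -` A \<inter> space M"
    by blast
  have "(\<lambda>x::real^'n. x $ i) -` A \<in> sets borel"
    using measurable_sets[OF component_measurable A(1)] by simp
  moreover have "S = U -` ((\<lambda>x. x $ i) -` A) \<inter> space M"
    using A(2) by auto
  ultimately show "S \<in> {U -` A \<inter> space M |A. A \<in> sets borel}"
    by blast
qed

lemma indep_components:
  fixes U :: "'a \<Rightarrow> real^'n" and V :: "'a \<Rightarrow> real^'m"
  assumes P: "prob_space M" and meas: "U \<in> borel_measurable M" "V \<in> borel_measurable M"
    and indep: "prob_space.indep_set M {U -` A \<inter> space M |A. A \<in> sets borel}
                                       {V -` A \<inter> space M |A. A \<in> sets borel}"
  shows "prob_space.indep_var M borel (\<lambda>\<omega>. U \<omega> $ i) borel (\<lambda>\<omega>. V \<omega> $ j)"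
proof -
  interpret prob_space M by (rule P)
  have "indep_sets (case_bool {(\<lambda>\<omega>. U \<omega> $ i) -` A \<inter> space M |A. A \<in> sets borel}
                              {(\<lambda>\<omega>. V \<omega> $ j) -` A \<inter> space M |A. A \<in> sets borel}) UNIV"
    using indep unfolding indep_set_def
    by (rule indep_sets_mono_sets) (simp split: bool.split add: generated_component_subset)
  moreover have "(\<lambda>b. {case_bool (\<lambda>\<omega>. U \<omega> $ i) (\<lambda>\<omega>. V \<omega> $ j) b -` A \<inter> space M |A. A \<in> sets (case_bool borel borel b)})
      = case_bool {(\<lambda>\<omega>. U \<omega> $ i) -` A \<inter> space M |A. A \<in> sets borel}
                  {(\<lambda>\<omega>. V \<omega> $ j) -` A \<inter> space M |A. A \<in> sets borel}"
    by (rule ext) (simp split: bool.split)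
  moreover have "random_variable borel (\<lambda>\<omega>. U \<omega> $ i)" "random_variable borel (\<lambda>\<omega>. V \<omega> $ j)"
    using measurable_compose[OF meas(1) component_measurable]
      measurable_compose[OF meas(2) component_measurable] by auto
  ultimately show ?thesis
    unfolding indep_var_def indep_vars_def2 by (simp split: bool.split)
qed

lemma indep_cross_moment_zero:
  fixes U :: "'a \<Rightarrow> real^'n" and V :: "'a \<Rightarrow> real^'m"
  assumes P: "prob_space M" and U: "L2_vec M U" "centered M U" and V: "L2_vec M V"
    and indep: "prob_space.indep_set M {U -` A \<inter> space M |A. A \<in> sets borel}
                                       {V -` A \<inter> space M |A. A \<in> sets borel}"
  shows "cross_moment M U V = 0"
proof -
  interpret prob_space M by (rule P)
  have "(\<integral>\<omega>. U \<omega> $ i * V \<omega> $ j \<partial>M) = (\<integral>\<omega>. U \<omega> $ i \<partial>M) * (\<integral>\<omega>. V \<omega> $ j \<partial>M)" for i j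
  proof (rule indep_var_lebesgue_integral)
    show "indep_var borel (\<lambda>\<omega>. U \<omega> $ i) borel (\<lambda>\<omega>. V \<omega> $ j)"
      using indep_components[OF P _ _ indep] U(1) V unfolding L2_vec_def by blast
    show "integrable M (\<lambda>\<omega>. U \<omega> $ i)" "integrable M (\<lambda>\<omega>. V \<omega> $ j)"
      using L2_fun_integrable[OF finite_measure_axioms L2_vec_component] U(1) V by blast+
  qed
  then have "(\<integral>\<omega>. U \<omega> $ i * V \<omega> $ j \<partial>M) = 0" for i j
    using U(2) unfolding centered_def by simp
  then show ?thesis
    unfolding cross_moment_def by (simp add: vec_eq_iff)
qed

lemma orthogonality_principle:
  fixes X :: "'a \<Rightarrow> real^'p" and W :: "'a \<Rightarrow> real^'q" and Q :: "real^'p^'p"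
  assumes X: "L2_vec M X" and W: "L2_vec M W"
    and orth: "cross_moment M W (\<lambda>\<omega>. X \<omega> - A0 *v W \<omega>) = 0"
    and Q: "\<And>x. 0 \<le> x \<bullet> (Q *v x)"
  shows "(\<integral>\<omega>. (X \<omega> - A0 *v W \<omega>) \<bullet> (Q *v (X \<omega> - A0 *v W \<omega>)) \<partial>M)
       \<le> (\<integral>\<omega>. (X \<omega> - A *v W \<omega>) \<bullet> (Q *v (X \<omega> - A *v W \<omega>)) \<partial>M)"
proof -
  define u where "u \<omega> = X \<omega> - A0 *v W \<omega>" for \<omega>
  define v where "v \<omega> = (A0 - A) *v W \<omega>" for \<omega>
  have u: "L2_vec M u" and v: "L2_vec M v"
    unfolding u_def v_def by (intro L2_vec_diff L2_vec_mv X W)+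
  have Qu: "L2_vec M (\<lambda>\<omega>. Q *v u \<omega>)" and Qv: "L2_vec M (\<lambda>\<omega>. Q *v v \<omega>)"
    by (intro L2_vec_mv u v)+
  have uW: "cross_moment M u W = 0"
    using orth cross_moment_transpose[of M u W] unfolding u_def
    by (simp add: transpose_def vec_eq_iff)
  have cross1: "cross_moment M u (\<lambda>\<omega>. Q *v v \<omega>) = 0"
    unfolding cross_moment_mv_right[OF u v] unfolding v_def cross_moment_mv_right[OF u W] uW by simp
  have cross2: "cross_moment M v (\<lambda>\<omega>. Q *v u \<omega>) = 0"
    unfolding cross_moment_mv_right[OF v u] unfolding v_def cross_moment_mv_left[OF W u]
    using orth by (simp add: u_def[abs_def])
  have split: "X \<omega> - A *v W \<omega> = u \<omega> + v \<omega>" for \<omega>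
    unfolding u_def v_def by (simp add: matrix_vector_mult_diff_rdistrib)
  have "(\<integral>\<omega>. (X \<omega> - A *v W \<omega>) \<bullet> (Q *v (X \<omega> - A *v W \<omega>)) \<partial>M)
      = (\<integral>\<omega>. u \<omega> \<bullet> (Q *v u \<omega>) + u \<omega> \<bullet> (Q *v v \<omega>) + v \<omega> \<bullet> (Q *v u \<omega>) + v \<omega> \<bullet> (Q *v v \<omega>) \<partial>M)"
    unfolding split by (simp add: matrix_vector_right_distrib inner_add_left inner_add_right add_ac)
  also have "\<dots> = (\<integral>\<omega>. u \<omega> \<bullet> (Q *v u \<omega>) \<partial>M) + (\<integral>\<omega>. v \<omega> \<bullet> (Q *v v \<omega>) \<partial>M)"
    using integral_inner_cross_moment[OF u Qu] integral_inner_cross_moment[OF u Qv]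
      integral_inner_cross_moment[OF v Qu] integral_inner_cross_moment[OF v Qv] cross1 cross2
    by simp
  also have "\<dots> \<ge> (\<integral>\<omega>. u \<omega> \<bullet> (Q *v u \<omega>) \<partial>M)"
    using integral_nonneg_AE[of "\<lambda>\<omega>. v \<omega> \<bullet> (Q *v v \<omega>)" M] Q by simp
  finally show ?thesis
    unfolding u_def .
qed

text \<open>Second moments in the linear model Y = Z X + \<epsilon> with \<epsilon> independent of X: the
  cross-term vanishes, so E[Y X^T] = Z \<Sigma>.\<close>
lemma linear_model_moments:
  fixes X :: "'a \<Rightarrow> real^'p" and \<epsilon> :: "'a \<Rightarrow> real^'q" and Z :: "real^'p^'q"
  assumes P: "prob_space M"
    and X: "L2_vec M X" "centered M X" and \<epsilon>: "L2_vec M \<epsilon>" "centered M \<epsilon>"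
    and indep: "prob_space.indep_set M {X -` A \<inter> space M |A. A \<in> sets borel}
                                       {\<epsilon> -` A \<inter> space M |A. A \<in> sets borel}"
    and Y: "Y = (\<lambda>\<omega>. Z *v X \<omega> + \<epsilon> \<omega>)"
  shows "L2_vec M Y"
    and "cov_mat M X = cross_moment M X X"
    and "cov_mat M Y = cross_moment M Y Y"
    and "cross_moment M Y X = Z ** cov_mat M X"
proof -
  show "L2_vec M Y"
    unfolding Y by (intro L2_vec_add L2_vec_mv X \<epsilon>)
  show \<Sigma>: "cov_mat M X = cross_moment M X X"
    by (rule cov_mat_centered[OF X(2)])
  have "finite_measure M"
    using P unfolding prob_space_def by blast
  then show "cov_mat M Y = cross_moment M Y Y"
    unfolding Y by (intro cov_mat_centered centered_affine X \<epsilon>)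
  have "cross_moment M \<epsilon> X = transpose (cross_moment M X \<epsilon>)"
    by (rule cross_moment_transpose)
  also have "cross_moment M X \<epsilon> = 0"
    by (rule indep_cross_moment_zero[OF P X \<epsilon>(1) indep])
  finally have "cross_moment M \<epsilon> X = 0"
    by (simp add: transpose_def vec_eq_iff)
  then show "cross_moment M Y X = Z ** cov_mat M X"
    unfolding Y \<Sigma> cross_moment_add_left[OF L2_vec_mv[OF X(1)] \<epsilon>(1) X(1)] cross_moment_mv_left[OF X(1) X(1)]
    by simp
qed

lemma reconstruction_residual_uncorrelated:
  fixes X :: "'a \<Rightarrow> real^'p" and \<epsilon> :: "'a \<Rightarrow> real^'q" and Z :: "real^'p^'q"
  assumes P: "prob_space M"
    and X: "L2_vec M X" "centered M X" and \<epsilon>: "L2_vec M \<epsilon>" "centered M \<epsilon>"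
    and indep: "prob_space.indep_set M {X -` A \<inter> space M |A. A \<in> sets borel}
                                       {\<epsilon> -` A \<inter> space M |A. A \<in> sets borel}"
    and Y: "Y = (\<lambda>\<omega>. Z *v X \<omega> + \<epsilon> \<omega>)"
    and \<Sigma>: "\<Sigma> = cov_mat M X" and C: "C = cov_mat M Y"
    and K: "K = \<Sigma> ** transpose Z ** mp_inverse C"
    and B: "B = Z ** \<Sigma> ** transpose Z"
    and A0: "A0 = \<Sigma> ** transpose Z ** mp_inverse B"
  shows "cross_moment M (\<lambda>\<omega>. Z *v (K *v Y \<omega>)) (\<lambda>\<omega>. X \<omega> - A0 *v (Z *v (K *v Y \<omega>))) = 0"
proof -
  note moments = linear_model_moments[OF P X \<epsilon> indep Y]
  have \<Sigma>_sym: "transpose \<Sigma> = \<Sigma>" and C_sym: "transpose C = C"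
    unfolding \<Sigma> C moments(2,3) by (metis cross_moment_transpose)+
  have \<Sigma>_psd: "0 \<le> x \<bullet> (\<Sigma> *v x)" for x
    unfolding \<Sigma> moments(2) by (rule cross_moment_psd[OF X(1)])
  define W where "W = (\<lambda>\<omega>. Z *v (K *v Y \<omega>))"
  have KY: "L2_vec M (\<lambda>\<omega>. K *v Y \<omega>)" and W_L2: "L2_vec M W"
    unfolding W_def by (intro L2_vec_mv moments(1))+
  have WX: "cross_moment M W X = Z ** K ** Z ** \<Sigma>"
    unfolding W_def cross_moment_mv_left[OF KY X(1)] cross_moment_mv_left[OF moments(1) X(1)]
      moments(4) \<Sigma> by (simp add: matrix_mul_assoc)
  have "cross_moment M W Y = Z ** K ** C"
    unfolding W_def cross_moment_mv_left[OF KY moments(1)] cross_moment_mv_left[OF moments(1) moments(1)]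
      C moments(3) by (simp add: matrix_mul_assoc)
  then have WW: "cross_moment M W W = Z ** K ** C ** transpose K ** transpose Z"
    using cross_moment_mv_right[OF W_L2 KY, of Z] cross_moment_mv_right[OF W_L2 moments(1), of K]
    unfolding W_def by (simp add: matrix_mul_assoc)
  have "cross_moment M W (\<lambda>\<omega>. X \<omega> - A0 *v W \<omega>) = Z ** K ** Z ** \<Sigma> - Z ** K ** C ** transpose K ** transpose Z ** transpose A0"
    unfolding cross_moment_diff_right[OF W_L2 X(1) L2_vec_mv[OF W_L2]] cross_moment_mv_right[OF W_L2 W_L2] WX WW ..
  also have "\<dots> = 0"
    using reconstruction_gain_identity[OF \<Sigma>_sym \<Sigma>_psd C_sym K B A0] by simp
  finally show ?thesis
    unfolding W_def .
qed

theorem lemma2: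
  fixes M :: "'a measure"
    and X :: "'a \<Rightarrow> real^'p" and \<epsilon> :: "'a \<Rightarrow> real^'q"
    and Z :: "real^'p^'q" and D :: "real^'p^'p"
  assumes "prob_space M"
    and "L2_vec M X" and "\<forall>i. integral\<^sup>L M (\<lambda>\<omega>. X \<omega> $ i) = 0"
    and "L2_vec M \<epsilon>" and "\<forall>i. integral\<^sup>L M (\<lambda>\<omega>. \<epsilon> \<omega> $ i) = 0"
    and "prob_space.indep_set M {X -` A \<inter> space M |A. A \<in> sets borel}
                            {\<epsilon> -` A \<inter> space M |A. A \<in> sets borel}"
    and "transpose D = D" and "\<forall>x. x \<noteq> 0 \<longrightarrow> 0 < x \<bullet> (D *v x)"
  shows "let \<Sigma> = cov_mat M X;
             Y = (\<lambda>\<omega>. Z *v X \<omega> + \<epsilon> \<omega>);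
             C = cov_mat M Y;
             K = \<Sigma> ** transpose Z ** mp_inverse C;
             B = Z ** \<Sigma> ** transpose Z;
             Z\<^sub>\<Sigma> = \<Sigma> ** transpose Z ** mp_inverse B;
             J = (\<lambda>A::real^'q^'p. integral\<^sup>L M (\<lambda>\<omega>. Dnorm_sq D (X \<omega> - A *v (Z *v (K *v Y \<omega>)))))
         in \<forall>A. J Z\<^sub>\<Sigma> \<le> J A"
proof -
  define \<Sigma> where "\<Sigma> = cov_mat M X"
  define Y where "Y = (\<lambda>\<omega>. Z *v X \<omega> + \<epsilon> \<omega>)"
  define C where "C = cov_mat M Y"
  define K where "K = \<Sigma> ** transpose Z ** mp_inverse C"
  define B where "B = Z ** \<Sigma> ** transpose Z"
  define A0 where "A0 = \<Sigma> ** transpose Z ** mp_inverse B"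
  have centered: "centered M X" "centered M \<epsilon>"
    using assms(3,5) unfolding centered_def by blast+
  have W_L2: "L2_vec M (\<lambda>\<omega>. Z *v (K *v Y \<omega>))"
    using linear_model_moments(1)[OF assms(1,2) centered(1) assms(4) centered(2) assms(6) Y_def]
    by (intro L2_vec_mv)
  have residual: "cross_moment M (\<lambda>\<omega>. Z *v (K *v Y \<omega>)) (\<lambda>\<omega>. X \<omega> - A0 *v (Z *v (K *v Y \<omega>))) = 0"
    by (rule reconstruction_residual_uncorrelated[OF assms(1,2) centered(1) assms(4) centered(2) assms(6)
          Y_def \<Sigma>_def C_def K_def B_def A0_def])
  have "0 \<le> x \<bullet> (D *v x)" for x
    using assms(8) by (cases "x = 0") (auto intro: less_imp_le)
  then have D_inv_psd: "0 \<le> x \<bullet> (mp_inverse D *v x)" for x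
    by (rule mp_inverse_psd[OF assms(7)])
  have "(\<integral>\<omega>. Dnorm_sq D (X \<omega> - A0 *v (Z *v (K *v Y \<omega>))) \<partial>M)
      \<le> (\<integral>\<omega>. Dnorm_sq D (X \<omega> - A *v (Z *v (K *v Y \<omega>))) \<partial>M)" for A
    unfolding Dnorm_sq_def by (rule orthogonality_principle[OF assms(2) W_L2 residual D_inv_psd])
  then show ?thesis
    unfolding Let_def \<Sigma>_def Y_def C_def K_def B_def A0_def by blast
qed

end
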